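(* Let $t\in(0,1]$ and define $\varphi_t\colon\mathbb Z\times\mathbb Z\to\mathbb C$ by $\varphi_t(i,j)=1/[(i-j)/2]_t$ for $i\ne j$ and $\varphi_t(i,i)=0$. Then for all $\mathbb Z$-graded Hilbert spaces $H=\bigoplus_{i\in\mathbb Z}H_i$, $K=\bigoplus_{i\in\mathbb Z}K_i$, the map $\mathbb M(\varphi_t)\colon B(H,K)\to B(H,K)$ sending an operator with block matrix $(T_{ij})_{i,j}$ to the operator with block matrix $(\varphi_t(i,j)T_{ij})_{i,j}$ is well defined and completely bounded with $$\|\mathbb M(\varphi_t)\|_{\mathrm{cb}}\le\frac{\pi\,(t^{1/2}+t^{-1/2})}{\sqrt3}.$$
   Context: For $s\in(0,1]$ and $r\in\mathbb R$ the $q$-number is $[r]_s=(s^r-s^{-r})/(s-s^{-1})$ if $s<1$ and $[r]_1=r$. An operator $T\in B(H,K)$ between $\mathbb Z$-graded Hilbert spaces has block matrix entries $T_{ij}\colon H_j\to K_i$. *)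

theory Defs
  imports Complex_Main
begin

definition qnum :: "real \<Rightarrow> real \<Rightarrow> real" where
  "qnum s r = (if s < 1 then (s powr r - s powr (-r)) / (s - 1 / s) else r)"

definition phi :: "real \<Rightarrow> int \<Rightarrow> int \<Rightarrow> complex" where
  "phi t i j = (if i = j then 0 else complex_of_real (1 / qnum t (real_of_int (i - j) / 2)))"

(* Concrete model: a Hilbert space is l^2(X) for an index set X (orthonormal basis);
   a Z-grading is a function g : X -> int, H_i = l^2(g^-1 i).
   An operator T : l^2(X) -> l^2(Y) is identified with its matrix a y x = <e_y, T e_x>.
   The operator norm of a matrix is the supremum of |<v, a u>| over finitely supported
   vectors u, v of norm <= 1; a matrix is a bounded operator iff this set is bounded. *)
definition mat_forms :: "'x set \<Rightarrow> 'y set \<Rightarrow> ('y \<Rightarrow> 'x \<Rightarrow> complex) \<Rightarrow> real set" where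
  "mat_forms X Y a = {cmod (\<Sum>y\<in>G. \<Sum>x\<in>F. cnj (v y) * a y x * u x) | F G u v.
      finite F \<and> F \<subseteq> X \<and> finite G \<and> G \<subseteq> Y \<and>
      (\<Sum>x\<in>F. (cmod (u x))\<^sup>2) \<le> 1 \<and> (\<Sum>y\<in>G. (cmod (v y))\<^sup>2) \<le> 1}"

definition bounded_mat :: "'x set \<Rightarrow> 'y set \<Rightarrow> ('y \<Rightarrow> 'x \<Rightarrow> complex) \<Rightarrow> bool" where
  "bounded_mat X Y a \<longleftrightarrow> bdd_above (mat_forms X Y a)"

definition mat_norm :: "'x set \<Rightarrow> 'y set \<Rightarrow> ('y \<Rightarrow> 'x \<Rightarrow> complex) \<Rightarrow> real" where
  "mat_norm X Y a = Sup (mat_forms X Y a)"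

(* Schur multiplier M(phi): block (i,j) = entries with gK y = i, gH x = j gets multiplied by phi i j *)
definition schur :: "(int \<Rightarrow> int \<Rightarrow> complex) \<Rightarrow> ('y \<Rightarrow> int) \<Rightarrow> ('x \<Rightarrow> int)
    \<Rightarrow> ('y \<Rightarrow> 'x \<Rightarrow> complex) \<Rightarrow> 'y \<Rightarrow> 'x \<Rightarrow> complex" where
  "schur \<phi> gK gH a = (\<lambda>y x. \<phi> (gK y) (gH x) * a y x)"

(* Amplification: M_n(B(H,K)) = B(H^n,K^n) with H^n = l^2(X x {..<n}), graded by gH o fst;
   id_n (x) M(phi) applies M(phi) to each block, i.e. is the Schur multiplier for the amplified grading.
   cb_set collects the norms ||(id_n (x) M(phi))(A)|| for ||A|| <= 1, n >= 1. *)
definition cb_set :: "(int \<Rightarrow> int \<Rightarrow> complex) \<Rightarrow> 'x set \<Rightarrow> 'y set \<Rightarrow> ('x \<Rightarrow> int) \<Rightarrow> ('y \<Rightarrow> int)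
    \<Rightarrow> real set" where
  "cb_set \<phi> X Y gH gK = {mat_norm (X \<times> {..<n}) (Y \<times> {..<n}) (schur \<phi> (gK \<circ> fst) (gH \<circ> fst) a) | (n::nat) a.
      n \<ge> 1 \<and> bounded_mat (X \<times> {..<n}) (Y \<times> {..<n}) a \<and> mat_norm (X \<times> {..<n}) (Y \<times> {..<n}) a \<le> 1}"

definition cb_bounded :: "(int \<Rightarrow> int \<Rightarrow> complex) \<Rightarrow> 'x set \<Rightarrow> 'y set \<Rightarrow> ('x \<Rightarrow> int) \<Rightarrow> ('y \<Rightarrow> int) \<Rightarrow> bool" where
  "cb_bounded \<phi> X Y gH gK \<longleftrightarrow> bdd_above (cb_set \<phi> X Y gH gK)"

definition cb_norm :: "(int \<Rightarrow> int \<Rightarrow> complex) \<Rightarrow> 'x set \<Rightarrow> 'y set \<Rightarrow> ('x \<Rightarrow> int) \<Rightarrow> ('y \<Rightarrow> int) \<Rightarrow> real" where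
  "cb_norm \<phi> X Y gH gK = Sup (cb_set \<phi> X Y gH gK)"

end

(*
  Since sinh is superadditive on [0, oo), |[k/2]_t| >= |k| / (t^(1/2) + t^(-1/2)), so each row
  of phi_t is square summable with norm at most C = pi (t^(1/2) + t^(-1/2)) / sqrt 3, the
  inverse squares over the nonzero integers summing to pi^2/3.  Such a row bound controls the
  Schur multiplier for every grading: splitting u along the grading of H,
  <v, M(phi)(T) u> = sum_m <v_m, T u_m> with v_m = conj (phi (., m)) v, and Cauchy-Schwarz
  over m gives |<v, M(phi)(T) u>| <= C |T| |u| |v|.  Applied to the amplified gradings this
  bounds the cb norm.
*)

theory Submission
  imports Defs "HOL-Analysis.Analysis"
begin

lemma of_nat_mult_diff_inverse_le:
  fixes w :: real
  assumes "1 \<le> w"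
  shows "real n * (w - 1 / w) \<le> w ^ n - 1 / w ^ n"
proof (induction n)
  case 0
  then show ?case by simp
next
  case (Suc n)
  define W where "W = w ^ n"
  have "1 \<le> W" using assms by (simp add: W_def)
  then have "0 \<le> (w - 1) * (W - 1) * (w * W - 1) / (w * W)"
    using assms mult_mono[of 1 w 1 W] by (intro divide_nonneg_nonneg mult_nonneg_nonneg) auto
  also have "\<dots> = (w * W - 1 / (w * W)) - (W - 1 / W) - (w - 1 / w)"
    using assms \<open>1 \<le> W\<close> by (simp add: field_simps)
  finally show ?case using Suc.IH by (simp add: W_def algebra_simps)
qed

lemma abs_int_le_qnum_half:
  assumes "0 < t" "t \<le> 1"
  shows "\<bar>real_of_int k\<bar> \<le> (sqrt t + 1 / sqrt t) * \<bar>qnum t (real_of_int k / 2)\<bar>"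
proof (cases "t = 1")
  case True
  then show ?thesis by (simp add: qnum_def)
next
  case False
  then have "t < 1" using assms by simp
  define w where "w = 1 / sqrt t"
  define n where "n = nat \<bar>k\<bar>"
  have "1 < w" using assms \<open>t < 1\<close> by (simp add: w_def)
  then have "0 < w - 1 / w" "0 < w + 1 / w"
    by (simp_all add: field_simps add_pos_pos less_1_mult[of w w])
  have t_powr: "t powr (x / 2) = w powr (- x)" for x
    using assms by (simp add: w_def powr_half_sqrt[symmetric] powr_divide powr_powr powr_minus_divide)
  have t_diff: "t - 1 / t = - ((w - 1 / w) * (w + 1 / w))"
    using assms by (simp add: w_def field_simps)
  have "1 \<le> w ^ n"
    using \<open>1 < w\<close> by simp
  then have "1 / w ^ n \<le> w ^ n"
    by (smt (verit) divide_le_eq_1)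
  moreover have "real_of_int k = real n \<or> real_of_int k = - real n"
    by (simp add: n_def abs_if)
  ultimately have "\<bar>w powr k - w powr (- k)\<bar> = w ^ n - 1 / w ^ n"
    using \<open>1 < w\<close> by (auto simp: powr_minus_divide powr_realpow)
  then have "\<bar>qnum t (real_of_int k / 2)\<bar> = (w ^ n - 1 / w ^ n) / ((w - 1 / w) * (w + 1 / w))"
    using \<open>t < 1\<close> t_powr[of k] t_powr[of "- k"] \<open>0 < w - 1 / w\<close> \<open>0 < w + 1 / w\<close>
    by (simp add: qnum_def t_diff abs_minus_commute)
  moreover have "real n * (w - 1 / w) \<le> w ^ n - 1 / w ^ n"
    using \<open>1 < w\<close> by (simp add: of_nat_mult_diff_inverse_le)
  moreover have "sqrt t + 1 / sqrt t = w + 1 / w" "\<bar>real_of_int k\<bar> = real n"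
    using assms by (simp_all add: w_def n_def)
  ultimately show ?thesis
    using \<open>0 < w - 1 / w\<close> \<open>0 < w + 1 / w\<close> by (simp add: pos_le_divide_eq)
qed

lemma sum_inverse_squares_pos_int_le:
  assumes "finite K" "K \<subseteq> {0<..}"
  shows "(\<Sum>k\<in>K. 1 / (real_of_int k)\<^sup>2) \<le> pi\<^sup>2 / 6"
proof -
  have basel: "(\<lambda>j. 1 / (1 + real j)\<^sup>2) sums (pi\<^sup>2 / 6)"
    using inverse_squares_sums by simp
  have "inj_on (\<lambda>k. nat (k - 1)) K"
    using assms(2) by (intro inj_onI) (smt (verit) greaterThan_iff nat_0_le subsetD)
  moreover have "1 + real (nat (k - 1)) = real_of_int k" if "k \<in> K" for k
    using assms(2) that by (auto simp: of_nat_diff)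
  ultimately have "(\<Sum>k\<in>K. 1 / (real_of_int k)\<^sup>2) = (\<Sum>j\<in>(\<lambda>k. nat (k - 1)) ` K. 1 / (1 + real j)\<^sup>2)"
    by (simp add: sum.reindex)
  also have "\<dots> \<le> pi\<^sup>2 / 6"
    using sum_le_suminf[OF sums_summable[OF basel]] sums_unique[OF basel] assms(1) by simp
  finally show ?thesis .
qed

lemma sum_inverse_squares_nonzero_int_le:
  assumes "finite K" "0 \<notin> K"
  shows "(\<Sum>k\<in>K. 1 / (real_of_int k)\<^sup>2) \<le> pi\<^sup>2 / 3"
proof -
  let ?f = "\<lambda>k. 1 / (real_of_int k)\<^sup>2"
  have "sum ?f K = sum ?f ({k\<in>K. 0 < k} \<union> {k\<in>K. k < 0})"
    using assms(2) by (intro arg_cong[where f = "sum ?f"]) (auto simp: linorder_not_less order.order_iff_strict)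
  also have "\<dots> = sum ?f {k\<in>K. 0 < k} + sum ?f {k\<in>K. k < 0}"
    using assms(1) by (intro sum.union_disjoint) auto
  also have "sum ?f {k\<in>K. k < 0} = sum ?f (uminus ` {k\<in>K. k < 0})"
    by (simp add: sum.reindex)
  also have "sum ?f {k\<in>K. 0 < k} + sum ?f (uminus ` {k\<in>K. k < 0}) \<le> pi\<^sup>2 / 6 + pi\<^sup>2 / 6"
    using assms(1) by (intro add_mono sum_inverse_squares_pos_int_le) auto
  finally show ?thesis by simp
qed

lemma norm_phi_le:
  assumes "0 < t" "t \<le> 1" "i \<noteq> j"
  shows "cmod (phi t i j) \<le> (sqrt t + 1 / sqrt t) / \<bar>real_of_int (i - j)\<bar>"
proof -
  let ?q = "qnum t (real_of_int (i - j) / 2)"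
  have "\<bar>real_of_int (i - j)\<bar> \<le> (sqrt t + 1 / sqrt t) * \<bar>?q\<bar>"
    using assms(1,2) by (rule abs_int_le_qnum_half)
  moreover have "0 < \<bar>real_of_int (i - j)\<bar>"
    using assms(3) by simp
  ultimately have "0 < \<bar>?q\<bar>"
    using assms(1) by (smt (verit) mult_nonneg_nonpos real_sqrt_gt_0_iff zero_less_divide_1_iff)
  then show ?thesis
    using assms(3) \<open>\<bar>real_of_int (i - j)\<bar> \<le> _\<close> \<open>0 < \<bar>real_of_int (i - j)\<bar>\<close>
    by (simp add: phi_def norm_divide le_divide_eq divide_le_eq mult.commute)
qed

lemma phi_row_sum_squares_le:
  assumes "0 < t" "t \<le> 1" "finite M"
  shows "(\<Sum>m\<in>M. (cmod (phi t n m))\<^sup>2) \<le> (pi * (sqrt t + 1 / sqrt t) / sqrt 3)\<^sup>2"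
proof -
  define B where "B = sqrt t + 1 / sqrt t"
  have "(\<Sum>m\<in>M. (cmod (phi t n m))\<^sup>2) = (\<Sum>m\<in>M - {n}. (cmod (phi t n m))\<^sup>2)"
    using assms(3) by (intro sum.mono_neutral_right) (auto simp: phi_def)
  also have "\<dots> \<le> (\<Sum>m\<in>M - {n}. B\<^sup>2 * (1 / (real_of_int (n - m))\<^sup>2))"
  proof (intro sum_mono)
    fix m assume "m \<in> M - {n}"
    then have "cmod (phi t n m) \<le> B / \<bar>real_of_int (n - m)\<bar>"
      using assms(1,2) unfolding B_def by (intro norm_phi_le) auto
    then show "(cmod (phi t n m))\<^sup>2 \<le> B\<^sup>2 * (1 / (real_of_int (n - m))\<^sup>2)"
      by (metis norm_ge_zero power_mono power_divide power2_abs times_divide_eq_right mult_1_right)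
  qed
  also have "\<dots> = B\<^sup>2 * (\<Sum>k\<in>(\<lambda>m. n - m) ` (M - {n}). 1 / (real_of_int k)\<^sup>2)"
    by (simp add: sum_distrib_left sum.reindex inj_on_def)
  also have "\<dots> \<le> B\<^sup>2 * (pi\<^sup>2 / 3)"
    using assms(3) by (intro mult_left_mono sum_inverse_squares_nonzero_int_le) auto
  also have "\<dots> = (pi * B / sqrt 3)\<^sup>2"
    by (simp add: power_divide power_mult_distrib)
  finally show ?thesis unfolding B_def .
qed

lemma zero_in_mat_forms: "0 \<in> mat_forms X Y a"
  unfolding mat_forms_def by (rule CollectI, rule exI[of _ "{}"], rule exI[of _ "{}"]) auto

lemma mat_norm_nonneg: "bounded_mat X Y a \<Longrightarrow> 0 \<le> mat_norm X Y a"
  unfolding bounded_mat_def mat_norm_def using zero_in_mat_forms by (rule cSup_upper2) auto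

lemma norm_mat_form_le_mat_norm:
  assumes "bounded_mat X Y a" "finite F" "F \<subseteq> X" "finite G" "G \<subseteq> Y"
    "(\<Sum>x\<in>F. (cmod (u x))\<^sup>2) \<le> 1" "(\<Sum>y\<in>G. (cmod (v y))\<^sup>2) \<le> 1"
  shows "cmod (\<Sum>y\<in>G. \<Sum>x\<in>F. cnj (v y) * a y x * u x) \<le> mat_norm X Y a"
proof -
  have "cmod (\<Sum>y\<in>G. \<Sum>x\<in>F. cnj (v y) * a y x * u x) \<in> mat_forms X Y a"
    unfolding mat_forms_def using assms by blast
  then show ?thesis
    using assms(1) unfolding bounded_mat_def mat_norm_def by (rule cSup_upper)
qed

lemma norm_mat_form_le:
  assumes a: "bounded_mat X Y a" and F: "finite F" "F \<subseteq> X" and G: "finite G" "G \<subseteq> Y"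
  shows "cmod (\<Sum>y\<in>G. \<Sum>x\<in>F. cnj (v y) * a y x * u x)
    \<le> mat_norm X Y a * sqrt (\<Sum>x\<in>F. (cmod (u x))\<^sup>2) * sqrt (\<Sum>y\<in>G. (cmod (v y))\<^sup>2)"
proof -
  define p where "p = sqrt (\<Sum>x\<in>F. (cmod (u x))\<^sup>2)"
  define q where "q = sqrt (\<Sum>y\<in>G. (cmod (v y))\<^sup>2)"
  have "0 \<le> p" "0 \<le> q"
    unfolding p_def q_def by (simp_all add: sum_nonneg)
  show ?thesis
  proof (cases "p = 0 \<or> q = 0")
    case True
    then have "(\<forall>x\<in>F. u x = 0) \<or> (\<forall>y\<in>G. v y = 0)"
      unfolding p_def q_def using F G by (simp add: sum_nonneg_eq_0_iff)
    then show ?thesis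
      using mat_norm_nonneg[OF a] \<open>0 \<le> p\<close> \<open>0 \<le> q\<close>
      by (auto simp: p_def[symmetric] q_def[symmetric])
  next
    case False
    with \<open>0 \<le> p\<close> \<open>0 \<le> q\<close> have "0 < p" "0 < q" by auto
    have unit_u: "(\<Sum>x\<in>F. (cmod (u x / p))\<^sup>2) = 1"
      using \<open>0 < p\<close> by (simp add: norm_divide power_divide flip: sum_divide_distrib) (simp add: p_def)
    have unit_v: "(\<Sum>y\<in>G. (cmod (v y / q))\<^sup>2) = 1"
      using \<open>0 < q\<close> by (simp add: norm_divide power_divide flip: sum_divide_distrib) (simp add: q_def)
    have "(\<Sum>y\<in>G. \<Sum>x\<in>F. cnj (v y / q) * a y x * (u x / p))
        = (\<Sum>y\<in>G. \<Sum>x\<in>F. cnj (v y) * a y x * u x) / of_real (p * q)"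
      by (simp add: sum_divide_distrib mult.commute)
    moreover have "cmod (\<Sum>y\<in>G. \<Sum>x\<in>F. cnj (v y / q) * a y x * (u x / p)) \<le> mat_norm X Y a"
      using unit_u unit_v by (intro norm_mat_form_le_mat_norm[OF a F G]) simp_all
    ultimately show ?thesis
      using \<open>0 < p\<close> \<open>0 < q\<close>
      by (simp add: norm_divide norm_mult divide_le_eq p_def[symmetric] q_def[symmetric] mult.assoc)
  qed
qed

lemma schur_mat_form_eq_sum_blocks:
  assumes "finite F"
  shows "(\<Sum>y\<in>G. \<Sum>x\<in>F. cnj (v y) * schur \<phi> gK gH a y x * u x)
    = (\<Sum>m\<in>gH ` F. \<Sum>y\<in>G. \<Sum>x\<in>{x\<in>F. gH x = m}. cnj (cnj (\<phi> (gK y) m) * v y) * a y x * u x)"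
proof -
  have "(\<Sum>y\<in>G. \<Sum>x\<in>F. cnj (v y) * schur \<phi> gK gH a y x * u x)
      = (\<Sum>y\<in>G. \<Sum>m\<in>gH ` F. \<Sum>x\<in>{x\<in>F. gH x = m}. cnj (v y) * schur \<phi> gK gH a y x * u x)"
    using assms by (intro sum.cong refl sum.group[symmetric]) auto
  also have "\<dots> = (\<Sum>y\<in>G. \<Sum>m\<in>gH ` F. \<Sum>x\<in>{x\<in>F. gH x = m}. cnj (cnj (\<phi> (gK y) m) * v y) * a y x * u x)"
    by (intro sum.cong refl) (auto simp: schur_def)
  finally show ?thesis
    by (rule trans[OF _ sum.swap])
qed

lemma sum_mult_le_of_sum_squares_le:
  fixes f g :: "'a \<Rightarrow> real"
  assumes "(\<Sum>i\<in>I. (f i)\<^sup>2) \<le> A\<^sup>2" "(\<Sum>i\<in>I. (g i)\<^sup>2) \<le> B\<^sup>2" "0 \<le> A" "0 \<le> B"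
  shows "(\<Sum>i\<in>I. f i * g i) \<le> A * B"
proof -
  have "(\<Sum>i\<in>I. f i * g i)\<^sup>2 \<le> (\<Sum>i\<in>I. (f i)\<^sup>2) * (\<Sum>i\<in>I. (g i)\<^sup>2)"
    by (rule Cauchy_Schwarz_ineq_sum)
  also have "\<dots> \<le> (A * B)\<^sup>2"
    using assms by (simp add: power_mult_distrib mult_mono sum_nonneg)
  finally show ?thesis
    by (rule power2_le_imp_le) (simp add: assms(3,4))
qed

lemma norm_schur_mat_form_le:
  assumes a: "bounded_mat X Y a" and "0 \<le> C"
    and rows: "\<And>n M. finite M \<Longrightarrow> (\<Sum>m\<in>M. (cmod (\<phi> n m))\<^sup>2) \<le> C\<^sup>2"
    and F: "finite F" "F \<subseteq> X" and G: "finite G" "G \<subseteq> Y"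
    and u: "(\<Sum>x\<in>F. (cmod (u x))\<^sup>2) \<le> 1" and v: "(\<Sum>y\<in>G. (cmod (v y))\<^sup>2) \<le> 1"
  shows "cmod (\<Sum>y\<in>G. \<Sum>x\<in>F. cnj (v y) * schur \<phi> gK gH a y x * u x) \<le> C * mat_norm X Y a"
proof -
  define M where "M = gH ` F"
  define Fm where "Fm m = {x\<in>F. gH x = m}" for m
  define vm where "vm m y = cnj (\<phi> (gK y) m) * v y" for m y
  define p where "p m = sqrt (\<Sum>x\<in>Fm m. (cmod (u x))\<^sup>2)" for m
  define q where "q m = sqrt (\<Sum>y\<in>G. (cmod (vm m y))\<^sup>2)" for m
  have "finite M" and Fm: "finite (Fm m)" "Fm m \<subseteq> X" for m
    using F by (auto simp: M_def Fm_def)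
  have "cmod (\<Sum>y\<in>G. \<Sum>x\<in>F. cnj (v y) * schur \<phi> gK gH a y x * u x)
      = cmod (\<Sum>m\<in>M. \<Sum>y\<in>G. \<Sum>x\<in>Fm m. cnj (vm m y) * a y x * u x)"
    using F by (simp add: schur_mat_form_eq_sum_blocks M_def Fm_def vm_def)
  also have "\<dots> \<le> (\<Sum>m\<in>M. cmod (\<Sum>y\<in>G. \<Sum>x\<in>Fm m. cnj (vm m y) * a y x * u x))"
    by (rule norm_sum)
  also have "\<dots> \<le> (\<Sum>m\<in>M. mat_norm X Y a * p m * q m)"
    unfolding p_def q_def
    by (intro sum_mono norm_mat_form_le[OF a Fm G])
  also have "\<dots> = mat_norm X Y a * (\<Sum>m\<in>M. p m * q m)"
    by (simp add: sum_distrib_left mult.assoc)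
  finally have bound: "cmod (\<Sum>y\<in>G. \<Sum>x\<in>F. cnj (v y) * schur \<phi> gK gH a y x * u x)
      \<le> mat_norm X Y a * (\<Sum>m\<in>M. p m * q m)" .
  have "(\<Sum>m\<in>M. (p m)\<^sup>2) = (\<Sum>m\<in>M. \<Sum>x\<in>Fm m. (cmod (u x))\<^sup>2)"
    unfolding p_def by (simp add: sum_nonneg)
  also have "\<dots> = (\<Sum>x\<in>F. (cmod (u x))\<^sup>2)"
    unfolding M_def Fm_def using F by (intro sum.group) auto
  finally have p_sq: "(\<Sum>m\<in>M. (p m)\<^sup>2) \<le> 1"
    using u by simp
  have "(\<Sum>m\<in>M. (q m)\<^sup>2) = (\<Sum>m\<in>M. \<Sum>y\<in>G. (cmod (vm m y))\<^sup>2)"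
    unfolding q_def by (simp add: sum_nonneg)
  also have "\<dots> = (\<Sum>y\<in>G. \<Sum>m\<in>M. (cmod (v y))\<^sup>2 * (cmod (\<phi> (gK y) m))\<^sup>2)"
    unfolding vm_def by (subst sum.swap) (simp add: norm_mult power_mult_distrib mult.commute)
  also have "\<dots> = (\<Sum>y\<in>G. (cmod (v y))\<^sup>2 * (\<Sum>m\<in>M. (cmod (\<phi> (gK y) m))\<^sup>2))"
    by (simp add: sum_distrib_left)
  also have "\<dots> \<le> (\<Sum>y\<in>G. (cmod (v y))\<^sup>2 * C\<^sup>2)"
    by (intro sum_mono mult_left_mono rows \<open>finite M\<close>) simp
  also have "\<dots> \<le> C\<^sup>2"
    using v by (simp flip: sum_distrib_right) (intro mult_left_le_one_le, simp_all add: sum_nonneg)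
  finally have q_sq: "(\<Sum>m\<in>M. (q m)\<^sup>2) \<le> C\<^sup>2" .
  have "(\<Sum>m\<in>M. p m * q m) \<le> C"
    using sum_mult_le_of_sum_squares_le[of p M 1 q C] p_sq q_sq \<open>0 \<le> C\<close> by simp
  then have "mat_norm X Y a * (\<Sum>m\<in>M. p m * q m) \<le> mat_norm X Y a * C"
    using mat_norm_nonneg[OF a] by (rule mult_left_mono)
  with bound show ?thesis
    by (simp add: mult.commute)
qed

lemma bounded_mat_schur_and_mat_norm_le:
  assumes a: "bounded_mat X Y a" and C: "0 \<le> C"
    and rows: "\<And>n M. finite M \<Longrightarrow> (\<Sum>m\<in>M. (cmod (\<phi> n m))\<^sup>2) \<le> C\<^sup>2"
  shows "bounded_mat X Y (schur \<phi> gK gH a) \<and> mat_norm X Y (schur \<phi> gK gH a) \<le> C * mat_norm X Y a"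
proof -
  have le: "z \<le> C * mat_norm X Y a" if "z \<in> mat_forms X Y (schur \<phi> gK gH a)" for z
    using that unfolding mat_forms_def by (auto intro!: norm_schur_mat_form_le[where \<phi> = \<phi>, OF a C rows])
  then have "bounded_mat X Y (schur \<phi> gK gH a)"
    unfolding bounded_mat_def bdd_above_def by blast
  moreover have "mat_norm X Y (schur \<phi> gK gH a) \<le> C * mat_norm X Y a"
    unfolding mat_norm_def[of X Y "schur \<phi> gK gH a"]
    using zero_in_mat_forms le by (intro cSup_least) blast+
  ultimately show ?thesis ..
qed

lemma mat_forms_zero: "mat_forms X Y (\<lambda>_ _. 0) = {0}"
proof -
  have "mat_forms X Y (\<lambda>_ _. 0) \<subseteq> {0}"
    unfolding mat_forms_def by auto
  then show ?thesis
    using zero_in_mat_forms by blast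
qed

lemma cb_bounded_and_cb_norm_le:
  assumes C: "0 \<le> C"
    and rows: "\<And>n M. finite M \<Longrightarrow> (\<Sum>m\<in>M. (cmod (\<phi> n m))\<^sup>2) \<le> C\<^sup>2"
  shows "cb_bounded \<phi> X Y gH gK \<and> cb_norm \<phi> X Y gH gK \<le> C"
proof -
  have le: "z \<le> C" if "z \<in> cb_set \<phi> X Y gH gK" for z
  proof -
    from that obtain n :: nat and a
      where z: "z = mat_norm (X \<times> {..<n}) (Y \<times> {..<n}) (schur \<phi> (gK \<circ> fst) (gH \<circ> fst) a)"
        and a: "bounded_mat (X \<times> {..<n}) (Y \<times> {..<n}) a"
        and a_le: "mat_norm (X \<times> {..<n}) (Y \<times> {..<n}) a \<le> 1"
      unfolding cb_set_def by blast
    have "z \<le> C * mat_norm (X \<times> {..<n}) (Y \<times> {..<n}) a"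
      unfolding z using bounded_mat_schur_and_mat_norm_le[where \<phi> = \<phi>, OF a C rows] by blast
    also have "\<dots> \<le> C"
      using a_le C by (simp add: mult_left_le)
    finally show ?thesis .
  qed
  have "mat_norm (X \<times> {..<1::nat}) (Y \<times> {..<1::nat}) (schur \<phi> (gK \<circ> fst) (gH \<circ> fst) (\<lambda>_ _. 0))
      \<in> cb_set \<phi> X Y gH gK"
    unfolding cb_set_def
    by (intro CollectI exI[of _ 1] exI[of _ "\<lambda>_ _. 0"] conjI refl)
      (simp_all add: bounded_mat_def mat_norm_def mat_forms_zero)
  then have "cb_set \<phi> X Y gH gK \<noteq> {}"
    by blast
  with le show ?thesis
    unfolding cb_bounded_def cb_norm_def bdd_above_def by (auto intro: cSup_least)
qed

theorem mainTheorem9: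
  fixes t :: real and X :: "'x set" and Y :: "'y set"
    and gH :: "'x \<Rightarrow> int" and gK :: "'y \<Rightarrow> int"
  assumes "0 < t" and "t \<le> 1"
  shows "(\<forall>a. bounded_mat X Y a \<longrightarrow> bounded_mat X Y (schur (phi t) gK gH a))
    \<and> cb_bounded (phi t) X Y gH gK
    \<and> cb_norm (phi t) X Y gH gK \<le> pi * (sqrt t + 1 / sqrt t) / sqrt 3"
proof -
  define C where "C = pi * (sqrt t + 1 / sqrt t) / sqrt 3"
  have C: "0 \<le> C"
    unfolding C_def using assms by simp
  have rows: "\<And>n M. finite M \<Longrightarrow> (\<Sum>m\<in>M. (cmod (phi t n m))\<^sup>2) \<le> C\<^sup>2"
    unfolding C_def using assms by (rule phi_row_sum_squares_le)
  have "bounded_mat X Y (schur (phi t) gK gH a)" if "bounded_mat X Y a" for a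
    using bounded_mat_schur_and_mat_norm_le[where \<phi> = "phi t", OF that C rows] by blast
  moreover have "cb_bounded (phi t) X Y gH gK \<and> cb_norm (phi t) X Y gH gK \<le> C"
    using cb_bounded_and_cb_norm_le[where \<phi> = "phi t", OF C rows] .
  ultimately show ?thesis
    unfolding C_def by blast
qed

end
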